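(* Let $f:\mathbb{R}^d\to\mathbb{R}$ be $L$-smooth (i.e. $\nabla f$ is $L$-Lipschitz in $\ell_2$). Let $\varepsilon>0$, $c_\infty>0$, $\lambda>0$, $\mu\in[0,1)$, and set $\lambda_k:=\lambda(1-\mu)^k$. Let $(\mathbf{n}_k)_{k\ge0}$ be vectors with nonnegative entries such that for all $k$ and all coordinates $i$: $\sqrt{(\mathbf{n}_k)_i}+\varepsilon\le c_\infty$ and $\dfrac{\sqrt{(\mathbf{n}_k)_i}+\varepsilon}{\sqrt{(\mathbf{n}_{k+1})_i}+\varepsilon}\ge 1-\mu$. Define $F_k(\boldsymbol{\theta}):=f(\boldsymbol{\theta})+\frac{\lambda_k}{2}\|\boldsymbol{\theta}\|^2_{\sqrt{\mathbf{n}_k}}$. Given $\boldsymbol{\theta}_k,\mathbf{u}_k\in\mathbb{R}^d$, let $$\boldsymbol{\theta}_{k+1}=\arg\min_{\boldsymbol{\theta}}\Big(\tfrac{\lambda_k}{2}\|\boldsymbol{\theta}\|^2_{\sqrt{\mathbf{n}_k}}+f(\boldsymbol{\theta}_k)+\langle\mathbf{u}_k,\boldsymbol{\theta}-\boldsymbol{\theta}_k\rangle+\tfrac{1}{2\eta}\|\boldsymbol{\theta}-\boldsymbol{\theta}_k\|^2_{\sqrt{\mathbf{n}_k}}\Big)$$ with $0<\eta\le\min\{\frac{\varepsilon}{3L},\frac{1}{10\lambda}\}$. Then, with $\mathbf{g}_k:=\nabla f(\boldsymbol{\theta}_k)$ and $\tilde{\boldsymbol{\theta}}_k:=(\sqrt{\mathbf{n}_k}+\varepsilon)\circ\boldsymbol{\theta}_k$,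 $$F_{k+1}(\boldsymbol{\theta}_{k+1})\le F_k(\boldsymbol{\theta}_k)-\frac{\eta}{4c_\infty}\|\mathbf{u}_k+\lambda_k\tilde{\boldsymbol{\theta}}_k\|^2+\frac{\eta}{2\varepsilon}\|\mathbf{g}_k-\mathbf{u}_k\|^2.$$
   Context: For a vector $\mathbf{n}\ge0$ (entrywise) and $\varepsilon>0$, $\|\mathbf{x}\|^2_{\sqrt{\mathbf{n}}}:=\langle\mathbf{x},(\sqrt{\mathbf{n}}+\varepsilon)\circ\mathbf{x}\rangle$, where the square root is taken coordinatewise and $\circ$ is the coordinatewise product. $\|\cdot\|$ is the Euclidean norm. *)

theory Defs
  imports "HOL-Analysis.Analysis"
begin

text \<open>Weighted squared norm: \<open>\<parallel>x\<parallel>^2_{sqrt n} = <x, (sqrt n + eps) o x>\<close>.\<close>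
definition wsqnorm :: "real \<Rightarrow> real ^ 'd \<Rightarrow> real ^ 'd \<Rightarrow> real" where
  "wsqnorm eps n x = (\<Sum>i\<in>UNIV. (sqrt (n $ i) + eps) * (x $ i)^2)"

definition L_smooth :: "real \<Rightarrow> (real ^ 'd \<Rightarrow> real) \<Rightarrow> (real ^ 'd \<Rightarrow> real ^ 'd) \<Rightarrow> bool" where
  "L_smooth L f G \<longleftrightarrow>
     (\<forall>x. (f has_derivative (\<lambda>h. G x \<bullet> h)) (at x)) \<and>
     (\<forall>x y. norm (G x - G y) \<le> L * norm (x - y))"

end

theory Submission imports Defs begin

text \<open>
  The step minimises a separable quadratic, so it is given coordinatewise by the stationarity
  condition \<open>w\<^sub>i d\<^sub>i (1/\<eta> + \<lambda>\<^sub>k) = -(u\<^sub>i + \<lambda>\<^sub>k w\<^sub>i \<theta>\<^sub>i)\<close>, where \<open>w = \<surd>n\<^sub>k + \<epsilon>\<close> and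
  \<open>d = \<theta>\<^sub>k\<^sub>+\<^sub>1 - \<theta>\<^sub>k\<close>. The descent lemma bounds \<open>f(\<theta>\<^sub>k\<^sub>+\<^sub>1)\<close>; the ratio condition lets the
  regulariser at step \<open>k+1\<close> be bounded by the one with weights \<open>\<surd>n\<^sub>k\<close>. What remains is a
  one-dimensional inequality per coordinate: Young's inequality splits off the gradient error,
  \<open>\<epsilon> \<le> w\<^sub>i\<close> and \<open>\<eta> \<le> \<epsilon>/(3L)\<close> absorb the smoothness term into the proximal term, and
  \<open>\<eta> \<le> 1/(10\<lambda>)\<close>, \<open>w\<^sub>i \<le> c\<^sub>\<infinity>\<close> turn what is left into the gradient-norm decrease.
\<close>

lemma descent_lemma:
  fixes f :: "'a::real_inner \<Rightarrow> real" and G :: "'a \<Rightarrow> 'a"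
  assumes deriv: "\<And>z. (f has_derivative (\<lambda>h. G z \<bullet> h)) (at z)"
    and lipschitz: "\<And>a b. norm (G a - G b) \<le> L * norm (a - b)"
  shows "f y \<le> f x + G x \<bullet> (y - x) + L / 2 * (norm (y - x))\<^sup>2"
proof -
  define d where "d = y - x"
  define \<phi> where "\<phi> t = f (x + t *\<^sub>R d) - t * (G x \<bullet> d) - L / 2 * t\<^sup>2 * (norm d)\<^sup>2" for t
  define \<phi>' where "\<phi>' t = G (x + t *\<^sub>R d) \<bullet> d - G x \<bullet> d - L * t * (norm d)\<^sup>2" for t
  have \<phi>_deriv: "(\<phi> has_real_derivative \<phi>' t) (at t)" for t
  proof -
    have "((\<lambda>t. x + t *\<^sub>R d) has_derivative (\<lambda>h. h *\<^sub>R d)) (at t)"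
      by (auto intro!: derivative_eq_intros)
    from has_derivative_compose[OF this deriv]
    have "((\<lambda>t. f (x + t *\<^sub>R d)) has_derivative (\<lambda>h. G (x + t *\<^sub>R d) \<bullet> (h *\<^sub>R d))) (at t)"
      by simp
    then have "((\<lambda>t. f (x + t *\<^sub>R d)) has_derivative (\<lambda>h. (G (x + t *\<^sub>R d) \<bullet> d) * h)) (at t)"
      by (simp add: mult.commute)
    then have f_line: "((\<lambda>t. f (x + t *\<^sub>R d)) has_real_derivative G (x + t *\<^sub>R d) \<bullet> d) (at t)"
      by (simp add: has_field_derivative_def)
    show ?thesis unfolding \<phi>_def \<phi>'_def
      by (rule derivative_eq_intros f_line refl | simp)+
  qed
  have \<phi>'_nonpos: "\<phi>' t \<le> 0" if "t \<ge> 0" for t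
  proof -
    have "(G (x + t *\<^sub>R d) - G x) \<bullet> d \<le> norm (G (x + t *\<^sub>R d) - G x) * norm d"
      by (rule norm_cauchy_schwarz)
    also have "\<dots> \<le> L * norm (t *\<^sub>R d) * norm d"
      using lipschitz[of "x + t *\<^sub>R d" x] by (simp add: mult_right_mono)
    also have "\<dots> = L * t * (norm d)\<^sup>2" using that by (simp add: power2_eq_square)
    finally show ?thesis unfolding \<phi>'_def by (simp add: inner_diff_left)
  qed
  obtain z where "0 < z" "\<phi> 1 - \<phi> 0 = \<phi>' z"
    using MVT2[of 0 1 \<phi> \<phi>'] \<phi>_deriv by auto
  with \<phi>'_nonpos[of z] have "\<phi> 1 \<le> \<phi> 0" by simp
  then show ?thesis unfolding \<phi>_def d_def by simp
qed

lemma separable_minimizer_coordinate: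
  fixes \<phi> :: "'d::finite \<Rightarrow> real \<Rightarrow> real" and x :: "real ^ 'd"
  assumes "(\<Sum>j\<in>UNIV. \<phi> j (x $ j)) \<le> (\<Sum>j\<in>UNIV. \<phi> j ((\<chi> j. if j = i then s else x $ j) $ j))"
  shows "\<phi> i (x $ i) \<le> \<phi> i s"
proof -
  have "(\<Sum>j\<in>UNIV. \<phi> j (x $ j)) = \<phi> i (x $ i) + (\<Sum>j\<in>UNIV - {i}. \<phi> j (x $ j))"
    by (simp add: sum.remove)
  moreover have "(\<Sum>j\<in>UNIV. \<phi> j ((\<chi> j. if j = i then s else x $ j) $ j))
      = \<phi> i s + (\<Sum>j\<in>UNIV - {i}. \<phi> j (x $ j))"
    by (simp add: sum.remove[of UNIV i])
  ultimately show ?thesis using assms by simp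
qed

lemma quadratic_minimizer_stationary:
  fixes a b x :: real
  assumes a: "a > 0" and min: "\<And>s. a * x\<^sup>2 + b * x \<le> a * s\<^sup>2 + b * s"
  shows "2 * a * x + b = 0"
proof -
  have "a * x\<^sup>2 + b * x \<le> a * (- b / (2 * a))\<^sup>2 + b * (- b / (2 * a))" by (rule min)
  then have "(2 * a * x + b)\<^sup>2 / (4 * a) \<le> 0"
    using a by (simp add: field_simps power2_eq_square)
  then show ?thesis using a by (simp add: divide_le_0_iff)
qed

lemma prox_step_stationary:
  fixes w :: "'d::finite \<Rightarrow> real" and x u x' :: "real ^ 'd"
  assumes w_pos: "\<And>i. w i > 0" and lk: "lk \<ge> 0" and eta: "eta > 0"
    and min: "\<And>y. lk / 2 * (\<Sum>i\<in>UNIV. w i * (x' $ i)\<^sup>2) + u \<bullet> (x' - x)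
          + 1 / (2 * eta) * (\<Sum>i\<in>UNIV. w i * (x' $ i - x $ i)\<^sup>2)
        \<le> lk / 2 * (\<Sum>i\<in>UNIV. w i * (y $ i)\<^sup>2) + u \<bullet> (y - x)
          + 1 / (2 * eta) * (\<Sum>i\<in>UNIV. w i * (y $ i - x $ i)\<^sup>2)"
  shows "w i * (x' $ i - x $ i) * (1 / eta + lk) = - (u $ i + lk * w i * x $ i)"
proof -
  define \<phi> where "\<phi> j s = lk / 2 * w j * s\<^sup>2 + u $ j * (s - x $ j)
    + 1 / (2 * eta) * w j * (s - x $ j)\<^sup>2" for j s
  have separable: "lk / 2 * (\<Sum>i\<in>UNIV. w i * (y $ i)\<^sup>2) + u \<bullet> (y - x)
      + 1 / (2 * eta) * (\<Sum>i\<in>UNIV. w i * (y $ i - x $ i)\<^sup>2) = (\<Sum>j\<in>UNIV. \<phi> j (y $ j))" for y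
    unfolding \<phi>_def inner_vec_def sum_distrib_left sum.distrib[symmetric]
    by (rule sum.cong) (simp_all add: algebra_simps)
  define a where "a = (lk + 1 / eta) * w i / 2"
  define b where "b = u $ i - w i * x $ i / eta"
  have \<phi>_quadratic: "\<phi> i s = a * s\<^sup>2 + b * s + (- u $ i * x $ i + w i * (x $ i)\<^sup>2 / (2 * eta))" for s
    unfolding \<phi>_def a_def b_def using eta by (simp add: field_simps power2_eq_square)
  have "\<phi> i (x' $ i) \<le> \<phi> i s" for s
    using min[of "\<chi> j. if j = i then s else x' $ j"]
    by (intro separable_minimizer_coordinate) (simp only: separable)
  moreover have "a > 0" unfolding a_def using lk eta w_pos[of i] by (simp add: add_nonneg_pos)
  ultimately have "2 * a * x' $ i + b = 0"
    by (intro quadratic_minimizer_stationary) (auto simp: \<phi>_quadratic)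
  then have stationary: "lk * w i * x' $ i + w i * x' $ i / eta = w i * x $ i / eta - u $ i"
    unfolding a_def b_def by (simp add: algebra_simps add_divide_distrib)
  have "w i * (x' $ i - x $ i) * (1 / eta + lk)
      = (lk * w i * x' $ i + w i * x' $ i / eta) - w i * x $ i / eta - lk * w i * x $ i"
    by (simp add: algebra_simps)
  then show ?thesis unfolding stationary by linarith
qed

lemma prox_step_coordinate_bound:
  fixes eta eps w c lk L d u t g :: real
  assumes eta: "eta > 0" and eps: "eps > 0" and w: "eps \<le> w" "w \<le> c"
    and lk: "0 \<le> lk" "lk \<le> 1 / (10 * eta)" and L: "0 \<le> L" "L \<le> eps / (3 * eta)"
    and stationary: "w * d * (1 / eta + lk) = - (u + lk * w * t)"
  shows "g * d + L / 2 * d\<^sup>2 + lk / 2 * w * (t + d)\<^sup>2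
     \<le> lk / 2 * w * t\<^sup>2 - eta / (4 * c) * (u + lk * w * t)\<^sup>2 + eta / (2 * eps) * (g - u)\<^sup>2"
proof -
  define h where "h = 1 / eta + lk"
  define q where "q = w * d\<^sup>2"
  have w_pos: "w > 0" and c_pos: "c > 0" using w eps by linarith+
  have q_nonneg: "q \<ge> 0" unfolding q_def using w_pos by simp
  have "u + lk * w * t = - (w * d * h)" using stationary unfolding h_def by simp
  then have "(u + lk * w * t)\<^sup>2 = w\<^sup>2 * d\<^sup>2 * h\<^sup>2" by (simp add: power_mult_distrib)
  also have "\<dots> \<le> c * q * h\<^sup>2"
    unfolding q_def power2_eq_square[of w] using w w_pos by (simp add: mult_right_mono)
  also have "\<dots> \<le> c * q * (11 / (10 * eta))\<^sup>2"
    using c_pos q_nonneg lk eta unfolding h_def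
    by (intro mult_left_mono power_mono) (auto simp: field_simps)
  finally have "eta / (4 * c) * (u + lk * w * t)\<^sup>2 \<le> eta / (4 * c) * (c * q * (11 / (10 * eta))\<^sup>2)"
    using eta c_pos by (intro mult_left_mono) auto
  \<comment> \<open>\<open>(11/10)\<^sup>2/4 = 121/400 \<le> 1/3\<close>: the slack \<open>q/(3\<eta>)\<close> left by the proximal term suffices\<close>
  also have "\<dots> \<le> q / (3 * eta)"
    using c_pos eta q_nonneg by (simp add: field_simps power2_eq_square)
  finally have gradient_term: "eta / (4 * c) * (u + lk * w * t)\<^sup>2 \<le> q / (3 * eta)" .
  have "0 \<le> (eta * (g - u) - eps * d)\<^sup>2 / (2 * eps * eta)" using eps eta by simp
  also have "\<dots> = eta / (2 * eps) * (g - u)\<^sup>2 + eps / (2 * eta) * d\<^sup>2 - (g - u) * d"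
    using eps eta by (simp add: field_simps power2_eq_square)
  finally have young: "(g - u) * d \<le> eta / (2 * eps) * (g - u)\<^sup>2 + eps / (2 * eta) * d\<^sup>2"
    by simp
  have "eps * d\<^sup>2 \<le> q" unfolding q_def using w by (simp add: mult_right_mono)
  then have eps_term: "eps / (2 * eta) * d\<^sup>2 \<le> q / (2 * eta)" and
    smooth_term: "L / 2 * d\<^sup>2 \<le> q / (6 * eta)"
    using eta L mult_right_mono[OF L(2), of "d\<^sup>2"] by (simp_all add: field_simps)
  have "(g * d + L / 2 * d\<^sup>2 + lk / 2 * w * (t + d)\<^sup>2)
      - (lk / 2 * w * t\<^sup>2 + (g - u) * d - q / eta - lk / 2 * q + L / 2 * d\<^sup>2)
      = d * (w * d * h + (u + lk * w * t))"
    unfolding q_def h_def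
    by (simp add: algebra_simps power2_eq_square add_divide_distrib diff_divide_distrib)
  also have "\<dots> = 0" using stationary unfolding h_def by simp
  finally have "g * d + L / 2 * d\<^sup>2 + lk / 2 * w * (t + d)\<^sup>2
      = lk / 2 * w * t\<^sup>2 + (g - u) * d - q / eta - lk / 2 * q + L / 2 * d\<^sup>2"
    by (simp only: right_minus_eq)
  moreover have "q / (2 * eta) + q / (6 * eta) - q / eta = - (q / (3 * eta))"
    by (simp add: field_simps)
  moreover have "lk / 2 * q \<ge> 0" using lk q_nonneg by simp
  ultimately show ?thesis using gradient_term young eps_term smooth_term by linarith
qed

lemma norm_vec_power2: "(norm (x :: real ^ 'd))\<^sup>2 = (\<Sum>i\<in>UNIV. (x $ i)\<^sup>2)"
proof -
  have "(norm x)\<^sup>2 = x \<bullet> x" by (simp add: power2_norm_eq_inner)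
  then show ?thesis by (simp add: inner_vec_def power2_eq_square)
qed

lemma prox_step_decrease:
  fixes w :: "'d::finite \<Rightarrow> real" and x x' u g :: "real ^ 'd"
  assumes eta: "eta > 0" and eps: "eps > 0" and w: "\<And>i. eps \<le> w i" "\<And>i. w i \<le> c"
    and lk: "0 \<le> lk" "lk \<le> 1 / (10 * eta)" and L: "0 \<le> L" "L \<le> eps / (3 * eta)"
    and stationary: "\<And>i. w i * (x' $ i - x $ i) * (1 / eta + lk) = - (u $ i + lk * w i * x $ i)"
  shows "g \<bullet> (x' - x) + L / 2 * (norm (x' - x))\<^sup>2 + lk / 2 * (\<Sum>i\<in>UNIV. w i * (x' $ i)\<^sup>2)
    \<le> lk / 2 * (\<Sum>i\<in>UNIV. w i * (x $ i)\<^sup>2)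
      - eta / (4 * c) * (norm (u + lk *\<^sub>R (\<chi> i. w i * x $ i)))\<^sup>2
      + eta / (2 * eps) * (norm (g - u))\<^sup>2"
proof -
  have "g \<bullet> (x' - x) + L / 2 * (norm (x' - x))\<^sup>2 + lk / 2 * (\<Sum>i\<in>UNIV. w i * (x' $ i)\<^sup>2)
    = (\<Sum>i\<in>UNIV. g $ i * (x' $ i - x $ i) + L / 2 * (x' $ i - x $ i)\<^sup>2 + lk / 2 * w i * (x' $ i)\<^sup>2)"
    unfolding sum.distrib norm_vec_power2 inner_vec_def sum_distrib_left by (simp add: mult.assoc)
  also have "\<dots> \<le> (\<Sum>i\<in>UNIV. lk / 2 * w i * (x $ i)\<^sup>2
      - eta / (4 * c) * (u $ i + lk * w i * x $ i)\<^sup>2 + eta / (2 * eps) * (g $ i - u $ i)\<^sup>2)"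
  proof (rule sum_mono)
    fix i
    show "g $ i * (x' $ i - x $ i) + L / 2 * (x' $ i - x $ i)\<^sup>2 + lk / 2 * w i * (x' $ i)\<^sup>2
      \<le> lk / 2 * w i * (x $ i)\<^sup>2 - eta / (4 * c) * (u $ i + lk * w i * x $ i)\<^sup>2
        + eta / (2 * eps) * (g $ i - u $ i)\<^sup>2"
      using prox_step_coordinate_bound[OF eta eps w(1)[of i] w(2)[of i] lk L stationary[of i]]
      by simp
  qed
  also have "\<dots> = lk / 2 * (\<Sum>i\<in>UNIV. w i * (x $ i)\<^sup>2)
      - eta / (4 * c) * (norm (u + lk *\<^sub>R (\<chi> i. w i * x $ i)))\<^sup>2
      + eta / (2 * eps) * (norm (g - u))\<^sup>2"
    unfolding sum.distrib sum_subtractf norm_vec_power2 sum_distrib_left by (simp add: mult.assoc)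
  finally show ?thesis .
qed

lemma wsqnorm_shrink:
  assumes eps: "eps > 0" and n'_nonneg: "\<And>i. n' $ i \<ge> 0"
    and ratio: "\<And>i. (sqrt (n $ i) + eps) / (sqrt (n' $ i) + eps) \<ge> 1 - mu"
  shows "(1 - mu) * wsqnorm eps n' x \<le> wsqnorm eps n x"
  unfolding wsqnorm_def sum_distrib_left
proof (rule sum_mono)
  fix i
  have "sqrt (n' $ i) + eps > 0" using eps n'_nonneg[of i] by (simp add: add_nonneg_pos)
  then have "(1 - mu) * (sqrt (n' $ i) + eps) \<le> sqrt (n $ i) + eps"
    using ratio[of i] by (simp add: field_simps)
  then show "(1 - mu) * ((sqrt (n' $ i) + eps) * (x $ i)\<^sup>2) \<le> (sqrt (n $ i) + eps) * (x $ i)\<^sup>2"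
    by (simp add: mult.assoc[symmetric] mult_right_mono)
qed

theorem mainTheorem3:
  fixes f :: "real ^ 'd \<Rightarrow> real" and G :: "real ^ 'd \<Rightarrow> real ^ 'd"
    and L eps c_inf lam mu eta :: real
    and n :: "nat \<Rightarrow> real ^ 'd"
    and k :: nat and theta u theta' :: "real ^ 'd"
  assumes smooth: "L_smooth L f G" and L_pos: "L > 0"
    and eps_pos: "eps > 0" and c_pos: "c_inf > 0" and lam_pos: "lam > 0"
    and mu: "0 \<le> mu" "mu < 1"
    and n_nonneg: "\<And>j i. n j $ i \<ge> 0"
    and n_bound: "\<And>j i. sqrt (n j $ i) + eps \<le> c_inf"
    and n_ratio: "\<And>j i. (sqrt (n j $ i) + eps) / (sqrt (n (Suc j) $ i) + eps) \<ge> 1 - mu"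
    and eta: "0 < eta" "eta \<le> min (eps / (3 * L)) (1 / (10 * lam))"
    and argmin: "\<And>th.
        lam * (1 - mu) ^ k / 2 * wsqnorm eps (n k) theta' + f theta + u \<bullet> (theta' - theta)
          + 1 / (2 * eta) * wsqnorm eps (n k) (theta' - theta)
        \<le> lam * (1 - mu) ^ k / 2 * wsqnorm eps (n k) th + f theta + u \<bullet> (th - theta)
          + 1 / (2 * eta) * wsqnorm eps (n k) (th - theta)"
  shows "f theta' + lam * (1 - mu) ^ Suc k / 2 * wsqnorm eps (n (Suc k)) theta'
      \<le> f theta + lam * (1 - mu) ^ k / 2 * wsqnorm eps (n k) theta
         - eta / (4 * c_inf) * (norm (u + (lam * (1 - mu) ^ k) *\<^sub>R (\<chi> i. (sqrt (n k $ i) + eps) * theta $ i)))\<^sup>2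
         + eta / (2 * eps) * (norm (G theta - u))\<^sup>2"
proof -
  define lk where "lk = lam * (1 - mu) ^ k"
  define w where "w i = sqrt (n k $ i) + eps" for i
  have wsqnorm_w: "wsqnorm eps (n k) x = (\<Sum>i\<in>UNIV. w i * (x $ i)\<^sup>2)" for x
    unfolding wsqnorm_def w_def ..
  have w_bounds: "eps \<le> w i" "w i \<le> c_inf" for i
    unfolding w_def using n_nonneg n_bound by auto
  have "(1 - mu) ^ k \<le> 1" using mu by (simp add: power_le_one)
  then have "lk \<le> lam" unfolding lk_def using lam_pos by (simp add: mult_left_le)
  moreover have "lam \<le> 1 / (10 * eta)" using eta lam_pos by (simp add: field_simps)
  moreover have "0 \<le> lk" unfolding lk_def using lam_pos mu by simp
  ultimately have lk_bounds: "0 \<le> lk" "lk \<le> 1 / (10 * eta)" by linarith+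
  have L_bound: "L \<le> eps / (3 * eta)" using eta L_pos by (simp add: field_simps)
  have "lk / 2 * (\<Sum>i\<in>UNIV. w i * (theta' $ i)\<^sup>2) + u \<bullet> (theta' - theta)
        + 1 / (2 * eta) * (\<Sum>i\<in>UNIV. w i * (theta' $ i - theta $ i)\<^sup>2)
      \<le> lk / 2 * (\<Sum>i\<in>UNIV. w i * (y $ i)\<^sup>2) + u \<bullet> (y - theta)
        + 1 / (2 * eta) * (\<Sum>i\<in>UNIV. w i * (y $ i - theta $ i)\<^sup>2)" for y
    using argmin[of y] unfolding wsqnorm_w lk_def[symmetric] by simp
  with w_bounds(1) eps_pos have stationary:
    "w i * (theta' $ i - theta $ i) * (1 / eta + lk) = - (u $ i + lk * w i * theta $ i)" for i
    by (intro prox_step_stationary lk_bounds(1) eta(1)) (auto intro: less_le_trans)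
  have "f theta' \<le> f theta + G theta \<bullet> (theta' - theta) + L / 2 * (norm (theta' - theta))\<^sup>2"
    by (rule descent_lemma) (use smooth in \<open>auto simp: L_smooth_def\<close>)
  moreover have "lam * (1 - mu) ^ Suc k / 2 * wsqnorm eps (n (Suc k)) theta'
      = lk / 2 * ((1 - mu) * wsqnorm eps (n (Suc k)) theta')"
    unfolding lk_def by simp
  moreover have "\<dots> \<le> lk / 2 * wsqnorm eps (n k) theta'"
    using wsqnorm_shrink[OF eps_pos n_nonneg n_ratio] lk_bounds(1) by (simp add: mult_left_mono)
  moreover note prox_step_decrease[OF eta(1) eps_pos w_bounds lk_bounds less_imp_le[OF L_pos] L_bound
      stationary, of "G theta"]
  ultimately show ?thesis unfolding lk_def wsqnorm_w w_def by linarith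
qed

end
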